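(* Consider an MWSBP instance with $s_i=w_i$ for all $i$, and let $W_1\ge W_2\ge\cdots\ge W_p$ be the weights of the bins output by WFFI-R. If $p\ge 2$ and $W_{p-1}>\frac23$, then the cost of the WFFI-R output is at most $\frac32\cdot\mathtt{OPT}$.
   Context: Min-Weighted Sum Bin Packing (MWSBP): an instance consists of $n$ items with sizes $s_i\in(0,1]$ and weights $w_i>0$. A feasible solution is a partition of $[n]$ into bins $B_1,\ldots,B_p$ with $\sum_{i\in B_k}s_i\le 1$; its cost is $\sum_{k=1}^p k\sum_{i\in B_k}w_i$; $\mathtt{OPT}$ is the minimum cost. The WFFI-R algorithm: sort the items in nondecreasing order of $s_i/w_i$ (ties broken arbitrarily); process them with First-Fit, i.e., put each item into the earliest-opened bin in which it still fits, opening a new bin if it fits in none; finally, reorder the bins in nonincreasing order of total weight. Its cost is $\sum_{k=1}^p k W_k$. *)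

theory Defs
  imports Complex_Main
begin

definition bin_load :: "(nat \<Rightarrow> real) \<Rightarrow> nat list \<Rightarrow> real" where
  "bin_load f b = sum_list (map f b)"

text \<open>First-Fit insertion of item i into the list of currently open bins
 (in order of opening).\<close>
fun ff_insert :: "(nat \<Rightarrow> real) \<Rightarrow> nat \<Rightarrow> nat list list \<Rightarrow> nat list list" where
  "ff_insert s i [] = [[i]]"
| "ff_insert s i (b # bs) =
     (if bin_load s b + s i \<le> 1 then (b @ [i]) # bs else b # ff_insert s i bs)"

definition first_fit :: "(nat \<Rightarrow> real) \<Rightarrow> nat list \<Rightarrow> nat list list" where
  "first_fit s xs = fold (ff_insert s) xs []"

definition wffi_order :: "nat \<Rightarrow> (nat \<Rightarrow> real) \<Rightarrow> (nat \<Rightarrow> real) \<Rightarrow> nat list \<Rightarrow> bool" where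
  "wffi_order n s w xs \<longleftrightarrow> distinct xs \<and> set xs = {0..<n} \<and>
     sorted_wrt (\<lambda>i j. s i / w i \<le> s j / w j) xs"

definition wffi_bins :: "(nat \<Rightarrow> real) \<Rightarrow> (nat \<Rightarrow> real) \<Rightarrow> nat list \<Rightarrow> nat list list" where
  "wffi_bins s w xs = sort_key (\<lambda>b. - bin_load w b) (first_fit s xs)"

definition sol_cost :: "(nat \<Rightarrow> real) \<Rightarrow> nat set list \<Rightarrow> real" where
  "sol_cost w B = (\<Sum>k<length B. real (k + 1) * (\<Sum>i\<in>B ! k. w i))"

definition feasible :: "nat \<Rightarrow> (nat \<Rightarrow> real) \<Rightarrow> nat set list \<Rightarrow> bool" where
  "feasible n s B \<longleftrightarrow>
     (\<forall>k<length B. B ! k \<noteq> {} \<and> (\<Sum>i\<in>B ! k. s i) \<le> 1) \<and>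
     (\<forall>k<length B. \<forall>l<length B. k \<noteq> l \<longrightarrow> B ! k \<inter> B ! l = {}) \<and>
     \<Union> (set B) = {0..<n}"

definition OPT :: "nat \<Rightarrow> (nat \<Rightarrow> real) \<Rightarrow> (nat \<Rightarrow> real) \<Rightarrow> real" where
  "OPT n s w = Inf {sol_cost w B | B. feasible n s B}"

end

theory Submission
  imports Defs "HOL-Library.Multiset"
begin

text \<open>When sizes equal weights, every bin of a feasible solution has load in [0, 1]. For
  loads U_1, ..., U_m in [0, 1] with total W one has \<Sum> k U_k \<ge> W(W+1)/2, since moving
  weight to earlier bins only lowers the cost; hence OPT \<ge> W(W+1)/2. In the WFFI-R output
  every bin but the last has load above 2/3, so the number of bins preceding any bin is at most
  3/2 times their total load, and induction over the bins bounds the cost by 3/4 W(W+1).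
  Apart from the ordering of the bins by load, only the fact that they partition the items is
  used.\<close>

lemma sum_weighted_index_ge_triangular:
  fixes V :: "nat \<Rightarrow> real"
  assumes "\<forall>k<m. 0 \<le> V k \<and> V k \<le> 1"
  shows "(\<Sum>k<m. V k) * ((\<Sum>k<m. V k) + 1) / 2 \<le> (\<Sum>k<m. real (k + 1) * V k)"
  using assms
proof (induction m)
  case 0
  then show ?case by simp
next
  case (Suc m)
  define S where "S = (\<Sum>k<m. V k)"
  define v where "v = V m"
  have IH: "S * (S + 1) / 2 \<le> (\<Sum>k<m. real (k + 1) * V k)"
    using Suc by (simp add: S_def)
  have "S \<le> real m"
    using sum_bounded_above[of "{..<m}" V 1] Suc.prems by (simp add: S_def)
  moreover have v: "0 \<le> v" "v \<le> 1" using Suc.prems by (auto simp: v_def)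
  ultimately have "S * v \<le> real m * v" by (simp add: mult_right_mono)
  moreover have "v * (v + 1) / 2 \<le> v" using v mult_left_le[of v v] by (simp add: field_simps)
  moreover have expand: "(S + v) * (S + v + 1) / 2 = S * (S + 1) / 2 + S * v + v * (v + 1) / 2"
    by (simp add: field_simps)
  moreover have shift: "real (m + 1) * v = real m * v + v" by (simp add: algebra_simps)
  ultimately have step: "(S + v) * (S + v + 1) / 2 \<le> S * (S + 1) / 2 + real (m + 1) * v"
    unfolding expand shift by linarith
  have "(\<Sum>k<Suc m. V k) = S + v" by (simp add: S_def v_def)
  then show ?case using IH step by (simp add: v_def)
qed

lemma sum_weighted_index_le_if_large:
  fixes V :: "nat \<Rightarrow> real"
  assumes "\<forall>k<q. 2/3 < V k"
  shows "(\<Sum>k<q. real (k + 1) * V k)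
    \<le> 3/4 * (\<Sum>k<q. V k) * ((\<Sum>k<q. V k) + 1) - (\<Sum>k<q. V k) / 4"
  using assms
proof (induction q)
  case 0
  then show ?case by simp
next
  case (Suc q)
  define S where "S = (\<Sum>k<q. V k)"
  define v where "v = V q"
  have IH: "(\<Sum>k<q. real (k + 1) * V k) \<le> 3/4 * S * (S + 1) - S / 4"
    using Suc by (simp add: S_def)
  have "2/3 * real q \<le> S"
    using sum_bounded_below[of "{..<q}" "2/3" V] Suc.prems
    by (simp add: S_def less_imp_le mult.commute)
  moreover have v: "2/3 < v" using Suc.prems by (simp add: v_def)
  ultimately have "2/3 * real q * v \<le> S * v" by (intro mult_right_mono) auto
  moreover have "2/3 * v \<le> v * v" using v by (intro mult_right_mono) auto
  moreover have expand: "3/4 * (S + v) * (S + v + 1) - (S + v) / 4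
      = (3/4 * S * (S + 1) - S / 4) + (3/2 * S * v + 3/4 * v * v + v / 2)"
    by (simp add: field_simps)
  moreover have shift: "real (q + 1) * v = real q * v + v" by (simp add: algebra_simps)
  ultimately have step: "(3/4 * S * (S + 1) - S / 4) + real (q + 1) * v
      \<le> 3/4 * (S + v) * (S + v + 1) - (S + v) / 4"
    unfolding expand shift by linarith
  have "(\<Sum>k<Suc q. V k) = S + v" by (simp add: S_def v_def)
  then show ?case using IH step by (simp add: v_def)
qed

lemma sum_weighted_index_le_if_large_but_last:
  fixes V :: "nat \<Rightarrow> real"
  assumes "2 \<le> p" and "\<forall>k<p - 1. 2/3 < V k" and "0 \<le> V (p - 1)"
  shows "(\<Sum>k<p. real (k + 1) * V k) \<le> 3/2 * ((\<Sum>k<p. V k) * ((\<Sum>k<p. V k) + 1) / 2)"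
proof -
  obtain q where q: "p = Suc q" "1 \<le> q" using assms(1) by (cases p) auto
  define S where "S = (\<Sum>k<q. V k)"
  define v where "v = V q"
  have IH: "(\<Sum>k<q. real (k + 1) * V k) \<le> 3/4 * S * (S + 1) - S / 4"
    using sum_weighted_index_le_if_large[of q V] assms(2) q by (simp add: S_def)
  have S_ge: "2/3 * real q \<le> S"
    using sum_bounded_below[of "{..<q}" "2/3" V] assms(2) q
    by (simp add: S_def less_imp_le mult.commute)
  have "0 \<le> (v - 1/6)\<^sup>2" by simp
  moreover have "(v - 1/6)\<^sup>2 = v * v - v / 3 + 1/36" by (simp add: power2_eq_square field_simps)
  \<comment> \<open>the last bin is paid for by the slack S/4 left over from the large bins\<close>
  ultimately have last: "v \<le> 3/4 * v * v + 3/4 * v + S / 4" using S_ge q(2) by linarith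
  have "0 \<le> v" using assms(3) q by (simp add: v_def)
  then have "2/3 * real q * v \<le> S * v" using S_ge by (intro mult_right_mono) auto
  moreover have expand: "3/2 * ((S + v) * ((S + v) + 1) / 2)
      = (3/4 * S * (S + 1) - S / 4) + (3/2 * S * v + 3/4 * v * v + 3/4 * v + S / 4)"
    by (simp add: field_simps)
  moreover have shift: "real (q + 1) * v = real q * v + v" by (simp add: algebra_simps)
  ultimately have step: "(3/4 * S * (S + 1) - S / 4) + real (q + 1) * v
      \<le> 3/2 * ((S + v) * ((S + v) + 1) / 2)"
    unfolding expand shift using last by linarith
  have "(\<Sum>k<p. V k) = S + v" by (simp add: q S_def v_def)
  moreover have "(\<Sum>k<p. real (k + 1) * V k) = (\<Sum>k<q. real (k + 1) * V k) + real (q + 1) * v"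
    by (simp add: q v_def)
  ultimately show ?thesis using IH step by simp
qed

lemma sum_list_concat_map:
  "sum_list (map f (concat xss)) = (\<Sum>xs\<leftarrow>xss. sum_list (map f xs))"
  by (induction xss) auto

lemma sum_bin_load_eq_sum_list_concat:
  "(\<Sum>k<length bs. bin_load w (bs ! k)) = sum_list (map w (concat bs))"
proof -
  have "(\<Sum>k<length bs. bin_load w (bs ! k)) = sum_list (map (bin_load w) bs)"
    by (simp add: sum_list_sum_nth atLeast0LessThan)
  then show ?thesis by (simp add: sum_list_concat_map bin_load_def[abs_def] o_def)
qed

lemma sol_cost_map_set:
  assumes "distinct (concat bs)"
  shows "sol_cost w (map set bs) = (\<Sum>k<length bs. real (k + 1) * bin_load w (bs ! k))"
  using assms unfolding sol_cost_def bin_load_def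
  by (intro sum.cong) (auto simp: sum_list_distinct_conv_sum_set distinct_concat_iff)

lemma feasible_sum_bin_weights:
  assumes "feasible n s B"
  shows "(\<Sum>k<length B. \<Sum>i\<in>B ! k. w i) = (\<Sum>i<n. w i)"
proof -
  have sub: "B ! k \<subseteq> {0..<n}" if "k < length B" for k
    using assms that unfolding feasible_def by (metis Sup_upper nth_mem)
  then have fin: "finite (B ! k)" if "k < length B" for k
    using that finite_subset by blast
  have "set B = (!) B ` {..<length B}" by (auto simp: set_conv_nth)
  then have "(\<Union>k<length B. B ! k) = {0..<n}" using assms by (simp add: feasible_def)
  then have "(\<Sum>i<n. w i) = sum w (\<Union>k<length B. B ! k)" by (simp add: atLeast0LessThan)
  also have "\<dots> = (\<Sum>k<length B. \<Sum>i\<in>B ! k. w i)"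
    using assms fin by (intro sum.UNION_disjoint) (auto simp: feasible_def)
  finally show ?thesis by simp
qed

lemma OPT_ge_triangular:
  assumes sizes: "\<forall>i<n. 0 < s i \<and> s i \<le> 1"
    and weights: "\<forall>i<n. 0 < w i"
    and eq: "\<forall>i<n. s i = w i"
  shows "(\<Sum>i<n. w i) * ((\<Sum>i<n. w i) + 1) / 2 \<le> OPT n s w"
  unfolding OPT_def
proof (rule cInf_greatest)
  have "feasible n s (map (\<lambda>i. {i}) [0..<n])" using sizes by (auto simp: feasible_def)
  then show "{sol_cost w B |B. feasible n s B} \<noteq> {}" by blast
next
  fix x assume "x \<in> {sol_cost w B |B. feasible n s B}"
  then obtain B where x: "x = sol_cost w B" and feas: "feasible n s B" by blast
  have "0 \<le> (\<Sum>i\<in>B ! k. w i) \<and> (\<Sum>i\<in>B ! k. w i) \<le> 1" if k: "k < length B" for k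
  proof -
    have sub: "B ! k \<subseteq> {0..<n}" using feas k unfolding feasible_def by (metis Sup_upper nth_mem)
    then have "(\<Sum>i\<in>B ! k. w i) = (\<Sum>i\<in>B ! k. s i)" using eq by (intro sum.cong) auto
    moreover have "0 \<le> (\<Sum>i\<in>B ! k. w i)"
      using sub weights by (intro sum_nonneg) (fastforce intro: less_imp_le)
    ultimately show ?thesis using feas k by (simp add: feasible_def)
  qed
  then show "(\<Sum>i<n. w i) * ((\<Sum>i<n. w i) + 1) / 2 \<le> x"
    using sum_weighted_index_ge_triangular[of "length B" "\<lambda>k. \<Sum>i\<in>B ! k. w i"]
    by (simp add: x sol_cost_def feasible_sum_bin_weights[OF feas])
qed

lemma mset_concat_ff_insert: "mset (concat (ff_insert s i bs)) = mset (concat bs) + {#i#}"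
  by (induction bs) auto

lemma mset_concat_wffi_bins: "mset (concat (wffi_bins s w xs)) = mset xs"
proof -
  have "mset (concat (fold (ff_insert s) xs bs)) = mset (concat bs) + mset xs" for bs
    by (induction xs arbitrary: bs) (auto simp: mset_concat_ff_insert)
  moreover have "mset (concat (sort_key f bs)) = mset (concat bs)" for f :: "nat list \<Rightarrow> real" and bs
    by (metis mset_concat mset_map mset_sort sum_mset_sum_list)
  ultimately show ?thesis by (simp add: wffi_bins_def first_fit_def)
qed

lemma wffi_bins_partition:
  assumes "wffi_order n s w xs"
  shows "distinct (concat (wffi_bins s w xs))" and "set (concat (wffi_bins s w xs)) = {0..<n}"
proof -
  have "distinct xs" "set xs = {0..<n}" using assms by (auto simp: wffi_order_def)
  then show "distinct (concat (wffi_bins s w xs))" "set (concat (wffi_bins s w xs)) = {0..<n}"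
    using mset_concat_wffi_bins[of s w xs] by (metis mset_eq_imp_distinct_iff, metis set_mset_mset)
qed

lemma wffi_bins_sum_bin_load:
  assumes "wffi_order n s w xs"
  shows "(\<Sum>k<length (wffi_bins s w xs). bin_load w (wffi_bins s w xs ! k)) = (\<Sum>i<n. w i)"
  using wffi_bins_partition[OF assms]
  by (simp add: sum_bin_load_eq_sum_list_concat sum_list_distinct_conv_sum_set atLeast0LessThan)

lemma wffi_bins_bin_load_nonneg:
  assumes "wffi_order n s w xs" and "\<forall>i<n. 0 \<le> w i" and "k < length (wffi_bins s w xs)"
  shows "0 \<le> bin_load w (wffi_bins s w xs ! k)"
proof -
  have "set (wffi_bins s w xs ! k) \<subseteq> {0..<n}"
    using assms(3) wffi_bins_partition(2)[OF assms(1)] by force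
  then show ?thesis using assms(2) unfolding bin_load_def by (intro sum_list_nonneg) auto
qed

lemma wffi_bins_load_antimono:
  assumes "i \<le> j" and "j < length (wffi_bins s w xs)"
  shows "bin_load w (wffi_bins s w xs ! j) \<le> bin_load w (wffi_bins s w xs ! i)"
proof -
  have "sorted (map (\<lambda>b. - bin_load w b) (wffi_bins s w xs))"
    by (simp add: wffi_bins_def sorted_sort_key)
  then show ?thesis using sorted_nth_mono[of _ i j] assms by fastforce
qed

theorem claim1:
  fixes n :: nat and s w :: "nat \<Rightarrow> real" and xs :: "nat list"
  assumes sizes: "\<forall>i<n. 0 < s i \<and> s i \<le> 1"
    and weights: "\<forall>i<n. 0 < w i"
    and eq: "\<forall>i<n. s i = w i"
    and ord: "wffi_order n s w xs"
    and p2: "length (wffi_bins s w xs) \<ge> 2"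
    and big: "bin_load w (wffi_bins s w xs ! (length (wffi_bins s w xs) - 2)) > 2/3"
  shows "sol_cost w (map set (wffi_bins s w xs)) \<le> 3/2 * OPT n s w"
proof -
  define bs where "bs = wffi_bins s w xs"
  define V where "V k = bin_load w (bs ! k)" for k
  have p: "2 \<le> length bs" using p2 by (simp add: bs_def)
  have "\<forall>k<length bs - 1. 2/3 < V k"
  proof (intro allI impI)
    fix k assume "k < length bs - 1"
    then have "V (length bs - 2) \<le> V k"
      using wffi_bins_load_antimono[of k "length bs - 2"] p by (simp add: V_def bs_def)
    then show "2/3 < V k" using big by (simp add: V_def bs_def)
  qed
  moreover have "0 \<le> V (length bs - 1)"
    using wffi_bins_bin_load_nonneg[OF ord] weights p by (simp add: V_def bs_def less_imp_le)
  ultimately have "(\<Sum>k<length bs. real (k + 1) * V k)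
      \<le> 3/2 * ((\<Sum>i<n. w i) * ((\<Sum>i<n. w i) + 1) / 2)"
    using sum_weighted_index_le_if_large_but_last[of "length bs" V] p wffi_bins_sum_bin_load[OF ord]
    by (simp add: V_def bs_def)
  moreover have "sol_cost w (map set bs) = (\<Sum>k<length bs. real (k + 1) * V k)"
    using wffi_bins_partition(1)[OF ord] by (simp add: sol_cost_map_set V_def bs_def)
  ultimately show ?thesis
    using OPT_ge_triangular[OF sizes weights eq] by (simp add: bs_def)
qed

end
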